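(* Let $n\geq 4$ and let $Q$ be any convex $n$-gon. Then there exist vectors $x_d\in X_Q$, one for each $d\in\mathrm{Diag}_n$, such that $\langle [\psi_{d'}], x_d\rangle>0$ for all $d,d'\in\mathrm{Diag}_n$ that do not cross (including $d=d'$). Equivalently, the secondary polytope $\Sigma_Q$ satisfies: there is an assignment $f\mapsto x_f\in X_Q$ on facets with $\langle f_1^\perp,x_{f_2}\rangle>0$ whenever facets $f_1,f_2$ share a vertex.
   Context: Let $Q$ be a convex $n$-gon in $\mathbb{R}^2$ with vertices $p_1,\dots,p_n$ in cyclic order; identify $p_i$ with label $i$, so triangulations of $Q$ (using only vertices of $Q$) are identified with elements of $\mathcal{T}_n$ (each triangulation identified with its set of diagonals) and diagonals with elements of $\mathrm{Diag}_n=\{\{i,j\}\subseteq[n]: i-j\not\equiv\pm1 \pmod n\}$. Two diagonals cross if they meet in the interior of $Q$. Let $X_Q$ be the space of formal combinations $\sum_{p\in V(Q)} c_p\cdot p$ with $\sum_p c_p=0$ and $\sum_p c_p p=0$ in $\mathbb{R}^2$; let $X_Q^*$ be the space of functions $V(Q)\to\mathbb{R}$ modulo restrictions of affine functions $\mathbb{R}^2\to\mathbb{R}$, with pairing $\langle[\psi],\sum_p c_p\cdot p\rangle=\sum_p c_p\psi(p)$. For a triangulation $T$ let $v_T=(\operatorname{area}(Q_{T,p}))_{p\in V(Q)}$ where $Q_{T,p}$ is the union of the triangles of $T$ having $p$ as a vertex. The secondary polytope $\Sigma_Q$ is the convex hull of the $v_T$, translated to lie in $X_Q$. It is known (Gelfand–Kapranov–Zelevinsky)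 that $\Sigma_Q$ is a full-dimensional polytope in the $(n-3)$-dimensional space $X_Q$ realizing the associahedron: its vertices are exactly the points $v_T$, $T\in\mathcal{T}_n$; its facets are $f_d$, $d\in\mathrm{Diag}_n$, where $f_d$ contains $v_T$ iff $d\in T$; and an outward normal of $f_d$ is $f_d^\perp=[\psi_d]$, where $\psi_d=\min(\ell_d,0)$ restricted to $V(Q)$ and $\ell_d$ is any nonzero affine function vanishing at both endpoints of $d$. Two facets $f_d,f_{d'}$ share a vertex iff $d,d'$ do not cross. *)

theory Defs
  imports "HOL-Analysis.Analysis"
begin

text \<open>Vertices of the polygon Q are p 1, ..., p n (points of real^2), labels 1..n.\<close>

definition orient :: "real^2 \<Rightarrow> real^2 \<Rightarrow> real^2 \<Rightarrow> real" where
  "orient a b c = (b$1 - a$1) * (c$2 - a$2) - (b$2 - a$2) * (c$1 - a$1)"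

definition convex_ngon :: "nat \<Rightarrow> (nat \<Rightarrow> real^2) \<Rightarrow> bool" where
  "convex_ngon n p \<longleftrightarrow>
     (\<forall>i j k. 1 \<le> i \<longrightarrow> i < j \<longrightarrow> j < k \<longrightarrow> k \<le> n \<longrightarrow> orient (p i) (p j) (p k) > 0) \<or>
     (\<forall>i j k. 1 \<le> i \<longrightarrow> i < j \<longrightarrow> j < k \<longrightarrow> k \<le> n \<longrightarrow> orient (p i) (p j) (p k) < 0)"

definition Diag :: "nat \<Rightarrow> nat set set" where
  "Diag n = {{i, j} | i j. i \<in> {1..n} \<and> j \<in> {1..n} \<and> i \<noteq> j \<and>
              (int i - int j) mod int n \<noteq> 1 mod int n \<and> (int i - int j) mod int n \<noteq> (-1) mod int n}"

text \<open>Two diagonals of a convex polygon cross (meet in the interior of Q)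
  iff their endpoints interleave in the cyclic order.\<close>
definition crosses :: "nat set \<Rightarrow> nat set \<Rightarrow> bool" where
  "crosses d d' \<longleftrightarrow> (\<exists>i j k l. i < k \<and> k < j \<and> j < l \<and>
       ((d = {i, j} \<and> d' = {k, l}) \<or> (d = {k, l} \<and> d' = {i, j})))"

definition XQ :: "nat \<Rightarrow> (nat \<Rightarrow> real^2) \<Rightarrow> (nat \<Rightarrow> real) set" where
  "XQ n p = {c. (\<forall>k. k \<notin> {1..n} \<longrightarrow> c k = 0) \<and> (\<Sum>k\<in>{1..n}. c k) = 0 \<and>
                (\<Sum>k\<in>{1..n}. c k *\<^sub>R p k) = 0}"

text \<open>psi_d for the affine function l(x) = a \<bullet> x + b: min(l, 0) on vertices.\<close>
definition psi :: "(nat \<Rightarrow> real^2) \<Rightarrow> real^2 \<Rightarrow> real \<Rightarrow> nat \<Rightarrow> real" where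
  "psi p a b k = min (a \<bullet> p k + b) 0"

definition pairing :: "nat \<Rightarrow> (nat \<Rightarrow> real) \<Rightarrow> (nat \<Rightarrow> real) \<Rightarrow> real" where
  "pairing n psi' c = (\<Sum>k\<in>{1..n}. c k * psi' k)"

end

theory Submission
  imports Defs
begin

text \<open>
  For a diagonal \<open>{i, j}\<close> with \<open>i < j\<close>, take \<open>x\<^sub>d\<close> to be the sum, over all \<open>i < g < j\<close> and
  all \<open>h\<close> outside \<open>[i, j]\<close>, of the affine dependence among \<open>p\<^sub>i, p\<^sub>g, p\<^sub>j, p\<^sub>h\<close>, signed to be
  positive at \<open>i\<close> and \<open>j\<close>. It lies in \<open>X\<^sub>Q\<close> and is negative at every other vertex.
  If \<open>d'\<close> does not cross \<open>d\<close>, the line through \<open>d'\<close> leaves \<open>p\<^sub>i\<close> and \<open>p\<^sub>j\<close> on one closed side.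
  Pairing with \<open>X\<^sub>Q\<close> does not see the replacement of \<open>\<ell>\<close> by \<open>-\<ell>\<close>, because
  \<open>min \<ell> 0 - min (-\<ell>) 0 = \<ell>\<close> is affine; so we may assume \<open>\<ell> \<ge> 0\<close> at \<open>p\<^sub>i\<close> and \<open>p\<^sub>j\<close>. Then every
  term \<open>x\<^sub>d(k) min (\<ell>(p\<^sub>k)) 0\<close> is nonnegative, and it is positive at any vertex where \<open>\<ell> < 0\<close>;
  such a vertex exists because \<open>d'\<close> is a diagonal, so vertices lie strictly on both sides of it.
\<close>

lemma orient_cycle: "orient a b c = orient b c a"
  by (simp add: orient_def algebra_simps)

lemma orient_swap: "orient a c b = - orient a b c"
  by (simp add: orient_def algebra_simps)

lemma orient_self [simp]: "orient a b a = 0" "orient a b b = 0"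
  by (simp_all add: orient_def)

lemma orient_dependence_sum: "orient b c d - orient a c d + orient a b d - orient a b c = 0"
  by (simp add: orient_def algebra_simps)

lemma orient_dependence:
  "orient b c d *\<^sub>R a - orient a c d *\<^sub>R b + orient a b d *\<^sub>R c - orient a b c *\<^sub>R d = (0::real^2)"
  by (simp add: vec_eq_iff forall_2 orient_def algebra_simps)

lemma inner_real2: "(x::real^2) \<bullet> y = x$1 * y$1 + x$2 * y$2"
  by (simp add: inner_vec_def sum_2)

lemma affine_vanishing_eq_orient:
  fixes a P Q :: "real^2"
  assumes "P \<noteq> Q" "a \<bullet> P + b = 0" "a \<bullet> Q + b = 0" "a \<noteq> 0 \<or> b \<noteq> 0"
  obtains \<kappa> where "\<kappa> \<noteq> 0" "\<And>X. a \<bullet> X + b = \<kappa> * orient P Q X"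
proof -
  define D1 D2 where "D1 = Q$1 - P$1" and "D2 = Q$2 - P$2"
  define \<kappa> where "\<kappa> = (a$2 * D1 - a$1 * D2) / (D1\<^sup>2 + D2\<^sup>2)"
  have D: "D1\<^sup>2 + D2\<^sup>2 \<noteq> 0"
    using assms(1) by (auto simp: D1_def D2_def vec_eq_iff forall_2)
  have perp: "a$1 * D1 + a$2 * D2 = 0"
    using assms(2,3) by (simp add: D1_def D2_def inner_real2 algebra_simps)
  have b: "b = - (a$1 * P$1 + a$2 * P$2)"
    using assms(2) by (simp add: inner_real2)
  have a: "a$1 = - \<kappa> * D2" "a$2 = \<kappa> * D1"
    using D perp by (simp_all add: \<kappa>_def field_simps power2_eq_square) (algebra+)
  have "\<kappa> \<noteq> 0"
    using assms(4) a b by (auto simp: vec_eq_iff forall_2)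
  moreover have "a \<bullet> X + b = \<kappa> * orient P Q X" for X
    by (simp add: inner_real2 b a orient_def D1_def D2_def algebra_simps)
  ultimately show thesis ..
qed

lemma Diag_elim:
  assumes "d \<in> Diag n" "n \<ge> 2"
  obtains i j where "d = {i, j}" "1 \<le> i" "i + 1 < j" "j \<le> n" "\<not> (i = 1 \<and> j = n)"
proof -
  obtain i j where d: "d = {i, j}" "i \<in> {1..n}" "j \<in> {1..n}" "i \<noteq> j"
    and "(int i - int j) mod int n \<noteq> 1 mod int n" "(int i - int j) mod int n \<noteq> (- 1) mod int n"
    using assms(1) unfolding Diag_def by blast
  moreover have "1 mod int n = 1" "(- 1) mod int n = int n - 1"
    using assms(2) by (simp_all add: zmod_minus1)
  ultimately have mod_ij: "(int i - int j) mod int n \<noteq> 1" "(int i - int j) mod int n \<noteq> int n - 1"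
    by simp_all
  show thesis
  proof (cases "i < j")
    case True
    have "(int i - int j) mod int n = (int i - int j + int n) mod int n"
      by simp
    also have "\<dots> = int i - int j + int n"
      using d(2,3) True by (intro mod_pos_pos_trivial) auto
    finally show thesis
      using d mod_ij True by (intro that[of i j]) auto
  next
    case False
    have "(int i - int j) mod int n = int i - int j"
      using d(2,3) False by (intro mod_pos_pos_trivial) auto
    then show thesis
      using d mod_ij False by (intro that[of j i]) auto
  qed
qed

lemma not_crosses:
  assumes "\<not> crosses {i, j} {u, v}"
  shows "\<not> (i < u \<and> u < j \<and> j < v)" "\<not> (u < i \<and> i < v \<and> v < j)"
  using assms unfolding crosses_def by blast+

lemma XQ_sum:
  assumes "finite A" "\<And>q. q \<in> A \<Longrightarrow> c q \<in> XQ n p"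
  shows "(\<lambda>k. \<Sum>q\<in>A. c q k) \<in> XQ n p"
proof -
  have "(\<Sum>k\<in>{1..n}. \<Sum>q\<in>A. c q k) = (\<Sum>q\<in>A. \<Sum>k\<in>{1..n}. c q k)"
    by (rule sum.swap)
  moreover have "(\<Sum>k\<in>{1..n}. (\<Sum>q\<in>A. c q k) *\<^sub>R p k) = (\<Sum>q\<in>A. \<Sum>k\<in>{1..n}. c q k *\<^sub>R p k)"
    by (simp add: scaleR_sum_left) (rule sum.swap)
  ultimately show ?thesis
    using assms(2) by (simp add: XQ_def)
qed

lemma XQ_scale:
  assumes "c \<in> XQ n p"
  shows "(\<lambda>k. r * c k) \<in> XQ n p"
  using assms by (simp add: XQ_def flip: sum_distrib_left scaleR_scaleR scaleR_sum_right)

lemma pairing_affine_XQ: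
  assumes "c \<in> XQ n p"
  shows "pairing n (\<lambda>k. a \<bullet> p k + b) c = 0"
proof -
  have "pairing n (\<lambda>k. a \<bullet> p k + b) c = a \<bullet> (\<Sum>k\<in>{1..n}. c k *\<^sub>R p k) + b * (\<Sum>k\<in>{1..n}. c k)"
    by (simp add: pairing_def algebra_simps sum.distrib sum_distrib_left inner_sum_right)
  with assms show ?thesis by (simp add: XQ_def)
qed

lemma pairing_psi_uminus:
  assumes "c \<in> XQ n p"
  shows "pairing n (psi p (- a) (- b)) c = pairing n (psi p a b) c"
proof -
  have "psi p a b k = (a \<bullet> p k + b) + psi p (- a) (- b) k" for k
    by (simp add: psi_def)
  then have "pairing n (psi p a b) c = pairing n (\<lambda>k. a \<bullet> p k + b) c + pairing n (psi p (- a) (- b)) c"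
    by (simp add: pairing_def algebra_simps sum.distrib)
  with pairing_affine_XQ[OF assms] show ?thesis by simp
qed

lemma pairing_psi_pos:
  assumes "k0 \<in> {1..n}" "a \<bullet> p k0 + b < 0" "c k0 < 0"
    and "\<And>k. k \<in> {1..n} \<Longrightarrow> a \<bullet> p k + b < 0 \<Longrightarrow> c k \<le> 0"
  shows "pairing n (psi p a b) c > 0"
  unfolding pairing_def
proof (rule sum_pos2[OF _ assms(1)])
  show "0 < c k0 * psi p a b k0"
    using assms(2,3) by (simp add: psi_def mult_neg_neg)
  show "0 \<le> c k * psi p a b k" if "k \<in> {1..n}" for k
    using assms(4)[OF that] by (cases "a \<bullet> p k + b < 0") (auto simp: psi_def mult_nonpos_nonpos)
qed simp

text \<open>Cramer's rule: the affine dependence among four points of the plane.\<close>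
definition affine_circuit :: "(nat \<Rightarrow> real^2) \<Rightarrow> nat \<Rightarrow> nat \<Rightarrow> nat \<Rightarrow> nat \<Rightarrow> nat \<Rightarrow> real" where
  "affine_circuit p a b c d k =
     (if k = a then orient (p b) (p c) (p d) else 0) - (if k = b then orient (p a) (p c) (p d) else 0)
   + (if k = c then orient (p a) (p b) (p d) else 0) - (if k = d then orient (p a) (p b) (p c) else 0)"

lemma affine_circuit_XQ:
  assumes "a \<in> {1..n}" "b \<in> {1..n}" "c \<in> {1..n}" "d \<in> {1..n}"
  shows "affine_circuit p a b c d \<in> XQ n p"
proof -
  have "(\<Sum>k\<in>{1..n}. affine_circuit p a b c d k) =
      orient (p b) (p c) (p d) - orient (p a) (p c) (p d) + orient (p a) (p b) (p d) - orient (p a) (p b) (p c)"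
    using assms by (simp add: affine_circuit_def sum.distrib sum_subtractf)
  moreover have "(\<Sum>k\<in>{1..n}. affine_circuit p a b c d k *\<^sub>R p k) =
      orient (p b) (p c) (p d) *\<^sub>R p a - orient (p a) (p c) (p d) *\<^sub>R p b
      + orient (p a) (p b) (p d) *\<^sub>R p c - orient (p a) (p b) (p c) *\<^sub>R p d"
    using assms by (simp add: affine_circuit_def scaleR_left_diff_distrib scaleR_left_distrib
        sum.distrib sum_subtractf if_distrib[of "\<lambda>r. r *\<^sub>R _"] cong: if_cong)
  ultimately show ?thesis
    using assms by (simp add: XQ_def affine_circuit_def orient_dependence_sum orient_dependence)
qed

locale oriented_polygon =
  fixes n :: nat and p :: "nat \<Rightarrow> real^2" and \<sigma> :: real
  assumes orient_pos: "1 \<le> i \<Longrightarrow> i < j \<Longrightarrow> j < k \<Longrightarrow> k \<le> n \<Longrightarrow> 0 < \<sigma> * orient (p i) (p j) (p k)"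

lemma convex_ngon_oriented:
  assumes "convex_ngon n p"
  obtains \<sigma> where "oriented_polygon n p \<sigma>"
  using assms unfolding convex_ngon_def
proof (elim disjE)
  assume "\<forall>i j k. 1 \<le> i \<longrightarrow> i < j \<longrightarrow> j < k \<longrightarrow> k \<le> n \<longrightarrow> orient (p i) (p j) (p k) > 0"
  then show thesis by (intro that[of 1]) (simp add: oriented_polygon_def)
next
  assume "\<forall>i j k. 1 \<le> i \<longrightarrow> i < j \<longrightarrow> j < k \<longrightarrow> k \<le> n \<longrightarrow> orient (p i) (p j) (p k) < 0"
  then show thesis by (intro that[of "-1"]) (simp add: oriented_polygon_def)
qed

context oriented_polygon
begin

lemma orient_outside_pos:
  assumes "1 \<le> u" "u < v" "v \<le> n" "k \<in> {1..n}" "k < u \<or> v < k"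
  shows "0 < \<sigma> * orient (p u) (p v) (p k)"
  using assms orient_pos[of k u v] orient_pos[of u v k] by (auto simp: orient_cycle[of "p k"])

lemma orient_inside_neg:
  assumes "1 \<le> u" "u < k" "k < v" "v \<le> n"
  shows "\<sigma> * orient (p u) (p v) (p k) < 0"
  using orient_pos[OF assms] by (simp add: orient_swap[of "p u" "p v"])

lemma affine_sides_of_diagonal:
  assumes "1 \<le> u" "u + 1 < v" "v \<le> n" "a \<noteq> 0 \<or> b \<noteq> 0" "a \<bullet> p u + b = 0" "a \<bullet> p v + b = 0"
  obtains s where "s \<noteq> 0"
    "\<And>k. k \<in> {1..n} \<Longrightarrow> k < u \<or> v < k \<Longrightarrow> 0 < s * (a \<bullet> p k + b)"
    "\<And>k. u < k \<Longrightarrow> k < v \<Longrightarrow> s * (a \<bullet> p k + b) < 0"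
proof -
  have "0 < \<sigma> * orient (p u) (p (u + 1)) (p v)"
    using assms(1-3) by (intro orient_pos) auto
  then have "p u \<noteq> p v" "\<sigma> \<noteq> 0" by auto
  then obtain \<kappa> where "\<kappa> \<noteq> 0" "\<And>X. a \<bullet> X + b = \<kappa> * orient (p u) (p v) X"
    using affine_vanishing_eq_orient assms(4-6) by metis
  then have "\<sigma> / \<kappa> * (a \<bullet> p k + b) = \<sigma> * orient (p u) (p v) (p k)" for k
    by simp
  with \<open>\<sigma> \<noteq> 0\<close> \<open>\<kappa> \<noteq> 0\<close> show thesis
    using that[of "\<sigma> / \<kappa>"] orient_outside_pos orient_inside_neg assms(1-3) by simp
qed

lemma diagonal_line_neg_vertex:
  assumes "1 \<le> u" "u + 1 < v" "v \<le> n" "\<not> (u = 1 \<and> v = n)"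
    and "a \<noteq> 0 \<or> b \<noteq> 0" "a \<bullet> p u + b = 0" "a \<bullet> p v + b = 0"
  shows "\<exists>k\<in>{1..n}. a \<bullet> p k + b < 0"
proof -
  obtain s where s: "s \<noteq> 0"
    and outside: "\<And>k. k \<in> {1..n} \<Longrightarrow> k < u \<or> v < k \<Longrightarrow> 0 < s * (a \<bullet> p k + b)"
    and inside: "\<And>k. u < k \<Longrightarrow> k < v \<Longrightarrow> s * (a \<bullet> p k + b) < 0"
    using affine_sides_of_diagonal assms(1-3,5-7) by metis
  define k_out where "k_out = (if 1 < u then 1 else n)"
  have "k_out \<in> {1..n}" "0 < s * (a \<bullet> p k_out + b)"
    using assms(1-4) outside by (auto simp: k_out_def)
  moreover have "u + 1 \<in> {1..n}" "s * (a \<bullet> p (u + 1) + b) < 0"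
    using assms(1-3) inside by auto
  ultimately show ?thesis
    using s by (cases "0 < s") (auto simp: zero_less_mult_iff mult_less_0_iff)
qed

lemma noncrossing_same_side:
  assumes "1 \<le> i" "i < j" "j \<le> n" "1 \<le> u" "u + 1 < v" "v \<le> n" "\<not> crosses {i, j} {u, v}"
    and "a \<noteq> 0 \<or> b \<noteq> 0" "a \<bullet> p u + b = 0" "a \<bullet> p v + b = 0"
  shows "0 \<le> (a \<bullet> p i + b) * (a \<bullet> p j + b)"
proof -
  obtain s where s: "s \<noteq> 0"
    and outside: "\<And>k. k \<in> {1..n} \<Longrightarrow> k < u \<or> v < k \<Longrightarrow> 0 < s * (a \<bullet> p k + b)"
    and inside: "\<And>k. u < k \<Longrightarrow> k < v \<Longrightarrow> s * (a \<bullet> p k + b) < 0"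
    using affine_sides_of_diagonal assms(4-6,8-10) by metis
  define f where "f k = s * (a \<bullet> p k + b)" for k
  have "f k \<le> 0" if "u \<le> k" "k \<le> v" for k
    using that inside[of k] assms(9,10) by (cases "k = u \<or> k = v") (auto simp: f_def)
  moreover have "0 \<le> f k" if "k \<in> {1..n}" "\<not> (u < k \<and> k < v)" for k
    using that outside[of k] assms(9,10) by (cases "k = u \<or> k = v") (auto simp: f_def)
  ultimately have "0 \<le> f i * f j"
    using assms(1-3) not_crosses[OF assms(7)]
    by (cases "u < i \<and> i < v \<or> u < j \<and> j < v") (auto intro: mult_nonpos_nonpos)
  also have "f i * f j = s\<^sup>2 * ((a \<bullet> p i + b) * (a \<bullet> p j + b))"
    by (simp add: f_def power2_eq_square algebra_simps)
  finally show ?thesis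
    using s by (simp add: zero_le_mult_iff)
qed

definition diag_vector :: "nat \<Rightarrow> nat \<Rightarrow> nat \<Rightarrow> real" where
  "diag_vector i j k = (\<Sum>(g, h) \<in> {i<..<j} \<times> ({1..n} - {i..j}). \<sigma> * affine_circuit p i g j h k)"

lemma diag_vector_XQ:
  assumes "1 \<le> i" "j \<le> n"
  shows "diag_vector i j \<in> XQ n p"
  unfolding diag_vector_def[abs_def]
  using assms by (intro XQ_sum) (auto intro!: XQ_scale affine_circuit_XQ)

lemma diag_vector_neg:
  assumes "1 \<le> i" "i + 1 < j" "j \<le> n" "\<not> (i = 1 \<and> j = n)" "k \<in> {1..n} - {i, j}"
  shows "diag_vector i j k < 0"
proof -
  let ?G = "{i<..<j}" and ?H = "{1..n} - {i..j}"
  have circuit_at_k: "\<sigma> * affine_circuit p i g j h k =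
      - (if k = g then \<sigma> * orient (p i) (p j) (p h) else 0) - (if k = h then \<sigma> * orient (p i) (p g) (p j) else 0)"
    if "g \<in> ?G" "h \<in> ?H" for g h
    using that assms(5) by (auto simp: affine_circuit_def algebra_simps)
  have orient_ijh: "0 < \<sigma> * orient (p i) (p j) (p h)" and orient_igj: "0 < \<sigma> * orient (p i) (p g) (p j)"
    if "g \<in> ?G" "h \<in> ?H" for g h
    using that assms(1-3) by (auto intro: orient_outside_pos orient_pos)
  have circuit_nonpos: "\<sigma> * affine_circuit p i g j h k \<le> 0"
    and circuit_neg: "k = g \<or> k = h \<Longrightarrow> \<sigma> * affine_circuit p i g j h k < 0"
    if "g \<in> ?G" "h \<in> ?H" for g h
  proof -
    have "g \<noteq> h" using that by auto
    then show "\<sigma> * affine_circuit p i g j h k \<le> 0" "k = g \<or> k = h \<Longrightarrow> \<sigma> * affine_circuit p i g j h k < 0"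
      using orient_ijh[OF that] orient_igj[OF that] by (auto simp: circuit_at_k[OF that])
  qed
  obtain g h where gh: "g \<in> ?G" "h \<in> ?H" "k = g \<or> k = h"
  proof (cases "k \<in> ?G")
    case True
    then show thesis
      using assms(1-4) by (intro that[of k "if 1 < i then 1 else n"]) auto
  next
    case False
    then show thesis
      using assms by (intro that[of "i + 1" k]) auto
  qed
  define f where "f = (\<lambda>(g, h). \<sigma> * affine_circuit p i g j h k)"
  have "diag_vector i j k = sum f (?G \<times> ?H)"
    by (simp add: diag_vector_def f_def)
  also have "\<dots> < sum (\<lambda>_. 0) (?G \<times> ?H)"
  proof (rule sum_strict_mono_ex1)
    show "\<forall>q\<in>?G \<times> ?H. f q \<le> 0"
      using circuit_nonpos by (auto simp: f_def)
    show "\<exists>q\<in>?G \<times> ?H. f q < 0"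
      by (rule bexI[of _ "(g, h)"]) (use gh circuit_neg in \<open>auto simp: f_def\<close>)
  qed simp
  finally show ?thesis by simp
qed

lemma pairing_psi_diag_vector_pos:
  assumes ij: "1 \<le> i" "i + 1 < j" "j \<le> n" "\<not> (i = 1 \<and> j = n)"
    and uv: "1 \<le> u" "u + 1 < v" "v \<le> n" "\<not> (u = 1 \<and> v = n)"
    and "\<not> crosses {i, j} {u, v}" "a \<noteq> 0 \<or> b \<noteq> 0" "a \<bullet> p u + b = 0" "a \<bullet> p v + b = 0"
  shows "pairing n (psi p a b) (diag_vector i j) > 0"
proof -
  have pos: "pairing n (psi p a' b') (diag_vector i j) > 0"
    if "0 \<le> a' \<bullet> p i + b'" "0 \<le> a' \<bullet> p j + b'" "\<exists>k\<in>{1..n}. a' \<bullet> p k + b' < 0" for a' b'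
  proof -
    from that(3) obtain k0 where "k0 \<in> {1..n}" "a' \<bullet> p k0 + b' < 0" ..
    with that(1,2) show ?thesis
      using ij diag_vector_neg by (intro pairing_psi_pos[of k0]) fastforce+
  qed
  have "0 \<le> (a \<bullet> p i + b) * (a \<bullet> p j + b)"
    using assms by (intro noncrossing_same_side[of i j u v]) auto
  then consider "0 \<le> a \<bullet> p i + b" "0 \<le> a \<bullet> p j + b"
    | "0 \<le> - a \<bullet> p i + - b" "0 \<le> - a \<bullet> p j + - b"
    by (fastforce simp: zero_le_mult_iff)
  then show ?thesis
  proof cases
    case 1
    moreover have "\<exists>k\<in>{1..n}. a \<bullet> p k + b < 0"
      using assms(10-12) by (intro diagonal_line_neg_vertex[OF uv])
    ultimately show ?thesis
      by (intro pos)
  next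
    case 2
    moreover have "\<exists>k\<in>{1..n}. - a \<bullet> p k + - b < 0"
      using assms(10-12) by (intro diagonal_line_neg_vertex[OF uv]) auto
    ultimately have "pairing n (psi p (- a) (- b)) (diag_vector i j) > 0"
      by (intro pos)
    then show ?thesis
      using ij by (simp add: pairing_psi_uminus diag_vector_XQ)
  qed
qed

end

theorem lemma2p6:
  fixes n :: nat and p :: "nat \<Rightarrow> real^2"
  assumes "n \<ge> 4" and "convex_ngon n p"
  shows "\<exists>x :: nat set \<Rightarrow> nat \<Rightarrow> real.
           (\<forall>d \<in> Diag n. x d \<in> XQ n p) \<and>
           (\<forall>d \<in> Diag n. \<forall>d' \<in> Diag n. \<not> crosses d d' \<longrightarrow>
              (\<forall>(a :: real^2) (b :: real). (a \<noteq> 0 \<or> b \<noteq> 0) \<longrightarrow>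
                   (\<forall>i \<in> d'. a \<bullet> p i + b = 0) \<longrightarrow>
                   pairing n (psi p a b) (x d) > 0))"
proof -
  obtain \<sigma> where "oriented_polygon n p \<sigma>"
    using convex_ngon_oriented assms(2) .
  then interpret oriented_polygon n p \<sigma> .
  have n: "n \<ge> 2" using assms(1) by simp
  show ?thesis
  proof (intro exI[of _ "\<lambda>d. diag_vector (Min d) (Max d)"] conjI ballI allI impI)
    fix d assume "d \<in> Diag n"
    then obtain i j where "d = {i, j}" "1 \<le> i" "i + 1 < j" "j \<le> n"
      using n by (rule Diag_elim)
    then show "diag_vector (Min d) (Max d) \<in> XQ n p"
      by (simp add: diag_vector_XQ)
  next
    fix d d' a b
    assume "d \<in> Diag n" "d' \<in> Diag n" "\<not> crosses d d'" "a \<noteq> 0 \<or> b \<noteq> 0" "\<forall>i\<in>d'. a \<bullet> p i + b = 0"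
    moreover obtain i j where "d = {i, j}" "1 \<le> i" "i + 1 < j" "j \<le> n" "\<not> (i = 1 \<and> j = n)"
      using \<open>d \<in> Diag n\<close> n by (rule Diag_elim)
    moreover obtain u v where "d' = {u, v}" "1 \<le> u" "u + 1 < v" "v \<le> n" "\<not> (u = 1 \<and> v = n)"
      using \<open>d' \<in> Diag n\<close> n by (rule Diag_elim)
    ultimately show "pairing n (psi p a b) (diag_vector (Min d) (Max d)) > 0"
      using pairing_psi_diag_vector_pos[of i j u v a b] by simp
  qed
qed

end
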